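(* Let $T$ be an unrooted phylogenetic tree with leaf set $[n]$, $n\ge 2$, and non-negative edge lengths $l(e)$. Define $\varphi_{Pa}(i)=\sum_e \mu(i,e)\,l(e)$, the sum running over all edges of $T$. Then for every leaf $i$, $$\varphi_{Pa}(i)=\frac12\sum_{j\in[n],\,j\ne i}\lambda_{ij}\,d(i,j),$$ where $\lambda_{ij}=\prod_{v\in I(T;i,j)}\frac1{d(v)-1}$ and $d(i,j)$ is the sum of the edge lengths on the path between leaves $i$ and $j$. Moreover, $\sum_{i\in[n]}\varphi_{Pa}(i)=\sum_e l(e)$.
   Context: An unrooted phylogenetic tree on $[n]$ is an unrooted tree with leaf set $[n]$ whose non-leaf vertices are unlabelled and have degree at least 3. $d(v)$ denotes the degree of vertex $v$. For a leaf $i$ and an edge $e$, $I(T;i,e)$ is the set of interior vertices on the path from $i$ to $e$, including the endpoint of $e$ reached first from $i$ (if interior) but not the other endpoint. Then $\mu(i,e)=\frac12\prod_{v\in I(T;i,e)}\frac1{d(v)-1}$, with the empty product equal to 1. For leaves $i\ne j$, $I(T;i,j)$ is the set of interior vertices on the path from $i$ to $j$. *)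

theory Defs
  imports Complex_Main
begin

definition deg :: "'a set set \<Rightarrow> 'a \<Rightarrow> nat" where
  "deg E v = card {e \<in> E. v \<in> e}"

definition is_path :: "'a set set \<Rightarrow> 'a list \<Rightarrow> bool" where
  "is_path E p \<longleftrightarrow> p \<noteq> [] \<and> distinct p \<and>
     (\<forall>k. Suc k < length p \<longrightarrow> {p ! k, p ! Suc k} \<in> E)"

definition is_cycle :: "'a set set \<Rightarrow> 'a list \<Rightarrow> bool" where
  "is_cycle E c \<longleftrightarrow> length c \<ge> 3 \<and> is_path E c \<and> {last c, hd c} \<in> E"

definition is_tree :: "'a set \<Rightarrow> 'a set set \<Rightarrow> bool" where
  "is_tree V E \<longleftrightarrow> finite V \<and> V \<noteq> {} \<and>
     (\<forall>e\<in>E. card e = 2 \<and> e \<subseteq> V) \<and>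
     (\<forall>u\<in>V. \<forall>v\<in>V. \<exists>p. is_path E p \<and> hd p = u \<and> last p = v) \<and>
     \<not> (\<exists>c. is_cycle E c)"

text \<open>Unrooted phylogenetic tree on [n] = {1..n}: a tree whose leaves (degree-1 vertices)
  are exactly 1..n, all other vertices having degree at least 3. Interior vertices are
  unlabelled; they are represented by arbitrary natural numbers outside {1..n}.\<close>
definition phylo_tree :: "nat \<Rightarrow> nat set \<Rightarrow> nat set set \<Rightarrow> bool" where
  "phylo_tree n V E \<longleftrightarrow> is_tree V E \<and> {1..n} \<subseteq> V \<and>
     (\<forall>v\<in>{1..n}. deg E v = 1) \<and> (\<forall>v\<in>V - {1..n}. deg E v \<ge> 3)"

text \<open>The (unique, in a tree) path from u to v.\<close>
definition tpath :: "'a set set \<Rightarrow> 'a \<Rightarrow> 'a \<Rightarrow> 'a list" where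
  "tpath E u v = (THE p. is_path E p \<and> hd p = u \<and> last p = v)"

definition path_edges :: "'a list \<Rightarrow> 'a set set" where
  "path_edges p = {{p ! k, p ! Suc k} | k. Suc k < length p}"

definition tdist :: "'a set set \<Rightarrow> ('a set \<Rightarrow> real) \<Rightarrow> 'a \<Rightarrow> 'a \<Rightarrow> real" where
  "tdist E l u v = (\<Sum>e\<in>path_edges (tpath E u v). l e)"

definition I_leaves :: "nat \<Rightarrow> nat set \<Rightarrow> nat set set \<Rightarrow> nat \<Rightarrow> nat \<Rightarrow> nat set" where
  "I_leaves n V E i j = {v \<in> set (tpath E i j). v \<in> V - {1..n}}"

text \<open>Endpoint of e reached first from i: the endpoint a such that the other endpoint
  does not lie on the path from i to a.\<close>
definition near_end :: "'a set set \<Rightarrow> 'a \<Rightarrow> 'a set \<Rightarrow> 'a" where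
  "near_end E i e = (THE a. a \<in> e \<and> (\<forall>b\<in>e. b \<noteq> a \<longrightarrow> b \<notin> set (tpath E i a)))"

definition I_edge :: "nat \<Rightarrow> nat set \<Rightarrow> nat set set \<Rightarrow> nat \<Rightarrow> nat set \<Rightarrow> nat set" where
  "I_edge n V E i e = {v \<in> set (tpath E i (near_end E i e)). v \<in> V - {1..n}}"

definition mu :: "nat \<Rightarrow> nat set \<Rightarrow> nat set set \<Rightarrow> nat \<Rightarrow> nat set \<Rightarrow> real" where
  "mu n V E i e = 1/2 * (\<Prod>v\<in>I_edge n V E i e. 1 / (real (deg E v) - 1))"

definition lambda :: "nat \<Rightarrow> nat set \<Rightarrow> nat set set \<Rightarrow> nat \<Rightarrow> nat \<Rightarrow> real" where
  "lambda n V E i j = (\<Prod>v\<in>I_leaves n V E i j. 1 / (real (deg E v) - 1))"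

definition phi_Pa :: "nat \<Rightarrow> nat set \<Rightarrow> nat set set \<Rightarrow> (nat set \<Rightarrow> real) \<Rightarrow> nat \<Rightarrow> real" where
  "phi_Pa n V E l i = (\<Sum>e\<in>E. mu n V E i e * l e)"

end

theory Submission
  imports Defs
begin

text \<open>
  Let a unit of mass arriving at an interior vertex v be split equally among the deg v - 1
  edges leaving v in the other directions. Then lambda(i,j) is the fraction of the mass sent
  out from leaf i that reaches leaf j, and 2 mu(i,e) is the fraction that crosses e.
  Mass is conserved: everything crossing an edge {u,w} towards w ends up at the leaves behind
  w (induction on the size of that branch). The edge e lies on the path from i to j exactly
  when j is behind e as seen from i, and then lambda(i,j) factors through e, so summing over
  those j gives 2 mu(i,e); exchanging the sums over leaves and edges yields the first
  identity. For the second, the leaves on the two sides of e each contribute 1/2 to the sum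
  of mu(i,e) over all leaves i.
\<close>

lemma is_path_iff_successively:
  "is_path E p \<longleftrightarrow> p \<noteq> [] \<and> distinct p \<and> successively (\<lambda>x y. {x, y} \<in> E) p"
  unfolding is_path_def successively_conv_nth by blast

lemma is_path_singleton [simp]: "is_path E [x]"
  by (simp add: is_path_iff_successively)

lemma is_path_rev: "is_path E p \<Longrightarrow> is_path E (rev p)"
  unfolding is_path_iff_successively by (auto simp: insert_commute)

lemma is_path_append_iff:
  "xs \<noteq> [] \<Longrightarrow> ys \<noteq> [] \<Longrightarrow> is_path E (xs @ ys) \<longleftrightarrow>
     is_path E xs \<and> is_path E ys \<and> set xs \<inter> set ys = {} \<and> {last xs, hd ys} \<in> E"
  unfolding is_path_iff_successively by (auto simp: successively_append_iff)

lemma is_path_Cons_iff: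
  "ys \<noteq> [] \<Longrightarrow> is_path E (x # ys) \<longleftrightarrow> is_path E ys \<and> x \<notin> set ys \<and> {x, hd ys} \<in> E"
  using is_path_append_iff[of "[x]" ys E] by auto

lemma is_path_appendD:
  assumes "is_path E (xs @ ys)"
  shows "xs \<noteq> [] \<Longrightarrow> is_path E xs" and "ys \<noteq> [] \<Longrightarrow> is_path E ys"
  using assms by (cases "xs = []"; cases "ys = []"; simp add: is_path_append_iff)+

lemma fork_gives_cycle:
  assumes p: "is_path E (x # p)" and q: "is_path E (x # q)"
    and ne: "p \<noteq> []" "q \<noteq> []" and hd_neq: "hd p \<noteq> hd q" and last_eq: "last p = last q"
  shows "\<exists>c. is_cycle E c"
proof -
  obtain qs w qr where q_split: "q = qs @ w # qr" "w \<in> set p" "\<forall>y\<in>set qs. y \<notin> set p"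
    using split_list_first_prop[of q "\<lambda>w. w \<in> set p"] last_eq ne by (metis last_in_set)
  obtain ps pr where p_split: "p = ps @ w # pr"
    using q_split(2) by (meson split_list)
  have arm_p: "is_path E (x # ps @ [w])"
    using is_path_appendD(1)[of E "x # ps @ [w]" pr] p p_split by simp
  have arm_q: "is_path E (x # qs @ [w])"
    using is_path_appendD(1)[of E "x # qs @ [w]" qr] q q_split by simp
  show ?thesis
  proof (cases "qs = []")
    case True
    then have "ps \<noteq> []" using hd_neq p_split q_split by auto
    moreover have "{w, x} \<in> E" using arm_q True by (simp add: is_path_Cons_iff insert_commute)
    ultimately have "is_cycle E (x # ps @ [w])"
      using arm_p by (auto simp: is_cycle_def Suc_le_eq)
    then show ?thesis ..
  next
    case False
    have "set (x # ps @ [w]) \<inter> set (rev qs) = {}"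
      using q q_split p_split by (auto simp: is_path_def)
    moreover have "is_path E (rev qs)" "{w, hd (rev qs)} \<in> E"
      using is_path_rev[OF arm_q] False by (auto simp: is_path_Cons_iff is_path_append_iff)
    ultimately have "is_path E ((x # ps @ [w]) @ rev qs)"
      using is_path_append_iff[of "x # ps @ [w]" "rev qs" E] arm_p False by simp
    moreover have "{hd qs, x} \<in> E"
      using q q_split False by (cases qs) (auto simp: is_path_Cons_iff insert_commute)
    ultimately have "is_cycle E ((x # ps @ [w]) @ rev qs)"
      using False by (auto simp: is_cycle_def last_rev Suc_le_eq)
    then show ?thesis ..
  qed
qed

lemma path_unique:
  assumes acyclic: "\<nexists>c. is_cycle E c"
  shows "is_path E p \<Longrightarrow> is_path E q \<Longrightarrow> hd p = hd q \<Longrightarrow> last p = last q \<Longrightarrow> p = q"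
proof (induction p arbitrary: q)
  case Nil
  then show ?case by (simp add: is_path_def)
next
  case (Cons x p)
  obtain q' where q: "q = x # q'"
    using Cons.prems by (cases q) (auto simp: is_path_def)
  have last_not_start: "last ys \<noteq> x" if "is_path E (x # ys)" "ys \<noteq> []" for ys
    using that by (auto simp: is_path_def)
  show ?case
  proof (cases "p = [] \<or> q' = []")
    case True
    then show ?thesis
      using Cons.prems q last_not_start by (metis last.simps)
  next
    case False
    have paths: "is_path E p" "is_path E q'"
      using Cons.prems q False by (auto simp: is_path_Cons_iff)
    have "last p = last q'" using Cons.prems q False by simp
    moreover have "hd p = hd q'"
      using fork_gives_cycle[of E x p q'] Cons.prems q False acyclic \<open>last p = last q'\<close>
      by blast
    ultimately show ?thesis using Cons.IH[OF paths(1)] paths(2) q by simp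
  qed
qed

lemma path_edges_append:
  "xs \<noteq> [] \<Longrightarrow> ys \<noteq> [] \<Longrightarrow> {last xs, hd ys} \<in> path_edges (xs @ ys)"
  unfolding path_edges_def
  by (rule CollectI, rule exI[of _ "length xs - 1"])
    (simp add: last_conv_nth hd_conv_nth nth_append)

lemma path_edgesE:
  assumes "e \<in> path_edges p"
  obtains ps x y r where "p = ps @ x # y # r" "e = {x, y}"
proof -
  obtain k where k: "e = {p ! k, p ! Suc k}" "Suc k < length p"
    using assms unfolding path_edges_def by blast
  then have "p = take k p @ p ! k # p ! Suc k # drop (Suc (Suc k)) p"
    by (simp add: Cons_nth_drop_Suc)
  then show ?thesis using k that by blast
qed

lemma path_edges_subset: "is_path E p \<Longrightarrow> path_edges p \<subseteq> E"
  unfolding path_edges_def is_path_def by blast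

locale tree =
  fixes V :: "'a set" and E :: "'a set set"
  assumes is_tree: "is_tree V E"
begin

lemma finite_V: "finite V"
  using is_tree by (simp add: is_tree_def)

lemma edge_card: "e \<in> E \<Longrightarrow> card e = 2" and edge_subset: "e \<in> E \<Longrightarrow> e \<subseteq> V"
  using is_tree by (simp_all add: is_tree_def)

lemma connected: "u \<in> V \<Longrightarrow> v \<in> V \<Longrightarrow> \<exists>p. is_path E p \<and> hd p = u \<and> last p = v"
  using is_tree by (simp add: is_tree_def)

lemma acyclic: "\<nexists>c. is_cycle E c"
  using is_tree by (simp add: is_tree_def)

lemma finite_E: "finite E"
  using edge_subset finite_V by (meson Pow_iff finite_Pow_iff finite_subset subsetI)

lemma edgeE:
  assumes "e \<in> E"
  obtains a b where "e = {a, b}" "a \<noteq> b"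
  using edge_card[OF assms] by (meson card_2_iff)

lemma edge_neq: "{a, b} \<in> E \<Longrightarrow> a \<noteq> b"
  using edge_card[of "{a, b}"] by auto

lemma edge_vertices: "{a, b} \<in> E \<Longrightarrow> a \<in> V \<and> b \<in> V"
  using edge_subset[of "{a, b}"] by auto

lemma set_path_subset: "is_path E p \<Longrightarrow> hd p \<in> V \<Longrightarrow> set p \<subseteq> V"
proof
  fix x assume p: "is_path E p" "hd p \<in> V" and "x \<in> set p"
  then obtain k where k: "k < length p" "x = p ! k" by (auto simp: in_set_conv_nth)
  show "x \<in> V"
  proof (cases k)
    case 0
    then show ?thesis using k p by (simp add: hd_conv_nth is_path_def)
  next
    case (Suc m)
    then have "{p ! m, p ! Suc m} \<in> E" using p k unfolding is_path_def by auto
    then show ?thesis using k Suc edge_vertices by auto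
  qed
qed

abbreviation path :: "'a \<Rightarrow> 'a \<Rightarrow> 'a list" where
  "path u v \<equiv> tpath E u v"

lemma tpath_eqI: "is_path E p \<Longrightarrow> hd p = u \<Longrightarrow> last p = v \<Longrightarrow> path u v = p"
  unfolding tpath_def by (rule the_equality) (auto intro: path_unique[OF acyclic])

lemma tpath:
  assumes "u \<in> V" "v \<in> V"
  shows "is_path E (path u v)" "path u v \<noteq> []" "hd (path u v) = u" "last (path u v) = v"
proof -
  obtain p where p: "is_path E p" "hd p = u" "last p = v" using connected assms by blast
  then have "path u v = p" by (rule tpath_eqI)
  with p show "is_path E (path u v)" "hd (path u v) = u" "last (path u v) = v" by simp_all
  then show "path u v \<noteq> []" by (simp add: is_path_def)
qed

lemma distinct_tpath: "u \<in> V \<Longrightarrow> v \<in> V \<Longrightarrow> distinct (path u v)"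
  using tpath(1) by (simp add: is_path_def)

lemma set_tpath_subset: "u \<in> V \<Longrightarrow> v \<in> V \<Longrightarrow> set (path u v) \<subseteq> V"
  using tpath set_path_subset by metis

lemma tpath_self: "path u u = [u]"
  by (rule tpath_eqI) simp_all

lemma tpath_edge: "{u, w} \<in> E \<Longrightarrow> path u w = [u, w]"
  by (rule tpath_eqI) (simp_all add: is_path_Cons_iff edge_neq)

lemma tpath_rev:
  assumes "u \<in> V" "v \<in> V"
  shows "path v u = rev (path u v)"
  using tpath[OF assms] by (intro tpath_eqI) (simp_all add: is_path_rev hd_rev last_rev)

lemma tpath_split:
  assumes "u \<in> V" "v \<in> V" and split: "path u v = ps @ w # r"
  shows "path u w = ps @ [w]" and "path w v = w # r"
proof -
  have "is_path E (ps @ [w] @ r)" "hd (ps @ [w]) = u" "last (w # r) = v"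
    using tpath[OF assms(1,2)] split by (auto simp: hd_append)
  then show "path u w = ps @ [w]" "path w v = w # r"
    using is_path_appendD[of E "ps @ [w]" r] is_path_appendD[of E ps "w # r"]
    by (auto intro!: tpath_eqI)
qed

lemma tpath_ConsE:
  assumes "w \<in> V" "j \<in> V" "j \<noteq> w"
  obtains x where "{w, x} \<in> E" "path w j = w # path x j"
proof -
  obtain x r where split: "path w j = w # x # r"
    using tpath(2-4)[OF assms(1,2)] assms(3)
    by (cases "path w j"; cases "tl (path w j)") auto
  then have "{w, x} \<in> E" using tpath(1)[OF assms(1,2)] by (simp add: is_path_Cons_iff)
  moreover have "path x j = x # r" using tpath_split(2)[of w j "[w]"] assms split by simp
  ultimately show ?thesis using that split by simp
qed

text \<open>For an edge {a, b}, branch a b is the vertex set of the component of T - {a, b}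
  containing b.\<close>

definition branch :: "'a \<Rightarrow> 'a \<Rightarrow> 'a set" where
  "branch a b = {v \<in> V. path a v = a # path b v}"

lemma in_branchD: "v \<in> branch a b \<Longrightarrow> v \<in> V"
  by (simp add: branch_def)

lemma finite_branch: "finite (branch a b)"
  using finite_V by (simp add: branch_def)

lemma in_branch_self: "{a, b} \<in> E \<Longrightarrow> b \<in> branch a b"
  using edge_vertices by (simp add: branch_def tpath_edge tpath_self)

lemma not_in_both_branches: "v \<in> branch a b \<Longrightarrow> v \<notin> branch b a"
  by (auto simp: branch_def dest: arg_cong[of _ _ length])

lemma in_some_branch:
  assumes e: "{a, b} \<in> E" and v: "v \<in> V"
  shows "v \<in> branch a b \<or> v \<in> branch b a"
proof (cases "a \<in> set (path b v)")
  case True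
  have ab: "a \<in> V" "b \<in> V" using edge_vertices e by auto
  obtain ps r where split: "path b v = ps @ a # r" using True by (meson split_list)
  then have "ps @ [a] = [b, a]"
    using tpath_split(1)[OF ab(2) v split] tpath_edge e by (simp add: insert_commute)
  then have "path b v = b # path a v"
    using tpath_split(2)[OF ab(2) v split] split by simp
  then show ?thesis using v by (simp add: branch_def)
next
  case False
  have ab: "a \<in> V" "b \<in> V" using edge_vertices e by auto
  have "is_path E (a # path b v)"
    using tpath[OF ab(2) v] False e by (simp add: is_path_Cons_iff)
  then have "path a v = a # path b v"
    using tpath[OF ab(2) v] by (intro tpath_eqI) simp_all
  then show ?thesis using v by (simp add: branch_def)
qed

lemma tpath_into_branch:
  assumes e: "{a, b} \<in> E" and j: "j \<in> branch a b" and v: "v \<in> set (path b j)"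
  shows "v \<in> branch a b"
proof -
  have ab: "a \<in> V" "b \<in> V" and jV: "j \<in> V"
    using edge_vertices e j in_branchD by auto
  obtain ps r where split: "path b j = ps @ v # r" using v by (meson split_list)
  have "path a j = (a # ps) @ v # r" using j split by (simp add: branch_def)
  then have "path a v = a # path b v"
    using tpath_split(1)[OF ab(1) jV, of "a # ps" v r] tpath_split(1)[OF ab(2) jV split] by simp
  then show ?thesis
    using set_tpath_subset[OF ab(2) jV] v by (auto simp: branch_def)
qed

lemma tpath_across_edge:
  assumes e: "{a, b} \<in> E" and i: "i \<in> branch b a" and j: "j \<in> branch a b"
  shows "path i j = path i a @ path b j"
proof -
  have ab: "a \<in> V" "b \<in> V" and ij: "i \<in> V" "j \<in> V"
    using edge_vertices e i j in_branchD by auto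
  have "set (path i a) \<inter> set (path b j) = {}"
  proof (rule ccontr)
    assume "set (path i a) \<inter> set (path b j) \<noteq> {}"
    then obtain v where "v \<in> set (path a i)" "v \<in> set (path b j)"
      using tpath_rev[OF ij(1) ab(1)] by auto
    then have "v \<in> branch b a" "v \<in> branch a b"
      using tpath_into_branch e i j by (auto simp: insert_commute)
    then show False using not_in_both_branches by blast
  qed
  then have "is_path E (path i a @ path b j)"
    using tpath[OF ij(1) ab(1)] tpath[OF ab(2) ij(2)] e by (simp add: is_path_append_iff)
  then show ?thesis
    using tpath[OF ij(1) ab(1)] tpath[OF ab(2) ij(2)] by (intro tpath_eqI) simp_all
qed

lemma tpath_edge_sides:
  assumes "i \<in> V" "j \<in> V" and split: "path i j = ps @ x # y # r"
  shows "i \<in> branch y x" and "j \<in> branch x y"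
proof -
  have xy: "x \<in> V" "y \<in> V" using set_tpath_subset[OF assms(1,2)] split by auto
  have "path x j = x # y # r" "path y j = y # r"
    using tpath_split(2)[OF assms(1,2)] split tpath_split(2)[of i j "ps @ [x]"] by auto
  then show "j \<in> branch x y" using assms(2) by (simp add: branch_def)
  have "path i y = ps @ [x, y]" "path i x = ps @ [x]"
    using tpath_split(1)[OF assms(1,2)] split tpath_split(1)[of i j "ps @ [x]"] assms by auto
  then show "i \<in> branch y x"
    using tpath_rev[OF assms(1) xy(1)] tpath_rev[OF assms(1) xy(2)] assms(1)
    by (simp add: branch_def)
qed

lemma edge_in_tpath_iff:
  assumes e: "{a, b} \<in> E" and i: "i \<in> branch b a" and j: "j \<in> V"
  shows "{a, b} \<in> path_edges (path i j) \<longleftrightarrow> j \<in> branch a b"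
proof
  assume "j \<in> branch a b"
  moreover have "i \<in> V" "a \<in> V" "b \<in> V" using i in_branchD edge_vertices e by auto
  ultimately show "{a, b} \<in> path_edges (path i j)"
    using tpath_across_edge[OF e i] path_edges_append tpath j by metis
next
  assume "{a, b} \<in> path_edges (path i j)"
  then obtain ps x y r where split: "path i j = ps @ x # y # r" "{a, b} = {x, y}"
    by (rule path_edgesE)
  have "i \<in> V" using i in_branchD by auto
  then have "i \<in> branch y x" "j \<in> branch x y"
    using tpath_edge_sides j split(1) by blast+
  then show "j \<in> branch a b"
    using split(2) i not_in_both_branches by (auto simp: doubleton_eq_iff)
qed

lemma near_end_eq:
  assumes e: "{a, b} \<in> E" and i: "i \<in> branch b a"
  shows "near_end E i {a, b} = a"
  unfolding near_end_def
proof (rule the_equality)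
  have ab: "a \<in> V" "b \<in> V" and iV: "i \<in> V" using edge_vertices e i in_branchD by auto
  have path_b: "path b i = b # path a i" using i by (simp add: branch_def)
  then have b_a: "b \<notin> set (path i a)"
    using distinct_tpath[OF ab(2) iV] tpath_rev[OF iV ab(1)] by simp
  have a_b: "a \<in> set (path i b)"
    using path_b tpath(2,3)[OF ab(1) iV] tpath_rev[OF iV ab(2)] hd_in_set[of "path a i"] by simp
  show "a \<in> {a, b} \<and> (\<forall>c\<in>{a, b}. c \<noteq> a \<longrightarrow> c \<notin> set (path i a))"
    using b_a by auto
  show "c = a" if "c \<in> {a, b} \<and> (\<forall>d\<in>{a, b}. d \<noteq> c \<longrightarrow> d \<notin> set (path i c))" for c
    using that a_b by auto
qed

lemma orient_edge_from:
  assumes "e \<in> E" "v \<in> V"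
  obtains a b where "e = {a, b}" "v \<in> branch b a"
proof -
  obtain a b where ab: "e = {a, b}" using edgeE[OF assms(1)] by metis
  then show ?thesis
    using in_some_branch[of a b v] assms that insert_commute by metis
qed

definition neighbours :: "'a \<Rightarrow> 'a set" where
  "neighbours w = {x. {w, x} \<in> E}"

lemma neighbours_subset: "neighbours w \<subseteq> V"
  unfolding neighbours_def using edge_vertices by blast

lemma finite_neighbours: "finite (neighbours w)"
  using finite_subset[OF neighbours_subset finite_V] .

lemma card_neighbours: "card (neighbours w) = deg E w"
  unfolding deg_def
proof (rule bij_betw_same_card[of "\<lambda>x. {w, x}"], rule bij_betwI')
  show "({w, x} = {w, y}) = (x = y)" if "x \<in> neighbours w" "y \<in> neighbours w" for x y
    using that edge_neq by (auto simp: neighbours_def doubleton_eq_iff)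
  show "{w, x} \<in> {e \<in> E. w \<in> e}" if "x \<in> neighbours w" for x
    using that by (simp add: neighbours_def)
  show "\<exists>x\<in>neighbours w. e = {w, x}" if e: "e \<in> {e \<in> E. w \<in> e}" for e
  proof -
    obtain a b where "e = {a, b}" using e edgeE by blast
    then show ?thesis using e by (auto simp: neighbours_def insert_commute)
  qed
qed

lemma self_notin_branch: "x \<in> V \<Longrightarrow> w \<notin> branch w x"
  using tpath(2)[of x w] by (auto simp: branch_def tpath_self)

lemma branches_at_disjoint:
  assumes "x \<in> V" "y \<in> V" "x \<noteq> y"
  shows "branch w x \<inter> branch w y = {}"
proof (rule ccontr)
  assume "branch w x \<inter> branch w y \<noteq> {}"
  then obtain j where j: "j \<in> V" "path w j = w # path x j" "path w j = w # path y j"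
    by (auto simp: branch_def)
  then have "path x j = path y j" by simp
  then show False using tpath(3)[of x j] tpath(3)[of y j] assms j(1) by metis
qed

lemma branch_of_neighbour_subset:
  assumes e: "{u, w} \<in> E" and x: "x \<in> neighbours w" "x \<noteq> u"
  shows "branch w x \<subseteq> branch u w"
proof
  fix v assume v: "v \<in> branch w x"
  have wx: "{w, x} \<in> E" using x by (simp add: neighbours_def)
  have wu: "{w, u} \<in> E" using e by (simp add: insert_commute)
  have uw: "u \<in> V" "w \<in> V" and vV: "v \<in> V" using edge_vertices e v in_branchD by auto
  have "u \<notin> set (path w v)"
  proof
    assume "u \<in> set (path w v)"
    then have "u \<in> set (path x v)" using v edge_neq[OF e] by (simp add: branch_def)
    then have "path w u = w # path x u" using tpath_into_branch[OF wx v] by (simp add: branch_def)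
    then have "path x u = [u]" using tpath_edge[OF wu] by simp
    then show False using tpath(3)[of x u] x(2) uw edge_vertices[OF wx] by simp
  qed
  then have "path u v = u # path w v"
    using tpath[OF uw(2) vV] e by (intro tpath_eqI) (simp_all add: is_path_Cons_iff)
  then show "v \<in> branch u w" using vV by (simp add: branch_def)
qed

lemma branch_eq_insert_Union:
  assumes e: "{u, w} \<in> E"
  shows "branch u w = insert w (\<Union>x\<in>neighbours w - {u}. branch w x)"
proof
  show "insert w (\<Union>x\<in>neighbours w - {u}. branch w x) \<subseteq> branch u w"
    using in_branch_self[OF e] branch_of_neighbour_subset[OF e] by blast
  show "branch u w \<subseteq> insert w (\<Union>x\<in>neighbours w - {u}. branch w x)"
  proof
    fix j assume j: "j \<in> branch u w"
    have uw: "u \<in> V" "w \<in> V" and jV: "j \<in> V" using edge_vertices e j in_branchD by auto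
    show "j \<in> insert w (\<Union>x\<in>neighbours w - {u}. branch w x)"
    proof (cases "j = w")
      case False
      then obtain x where x: "{w, x} \<in> E" "path w j = w # path x j"
        using tpath_ConsE[OF uw(2) jV] by metis
      have "path u j = u # w # path x j" using j x(2) by (simp add: branch_def)
      then have "x \<noteq> u"
        using distinct_tpath[OF uw(1) jV] tpath(2,3)[of x j] edge_vertices[OF x(1)] jV
        by (cases "path x j") auto
      then show ?thesis using x jV by (auto simp: neighbours_def branch_def)
    qed simp
  qed
qed

lemma branch_of_neighbour_psubset:
  assumes e: "{u, w} \<in> E" and x: "x \<in> neighbours w - {u}"
  shows "branch w x \<subset> branch u w"
  using branch_of_neighbour_subset[OF e] x in_branch_self[OF e] self_notin_branch[of x w]
    neighbours_subset
  by blast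

end

locale phylogenetic_tree =
  fixes n :: nat and V :: "nat set" and E :: "nat set set"
  assumes phylo: "phylo_tree n V E"
begin

sublocale tree V E
  using phylo by unfold_locales (simp add: phylo_tree_def)

lemma leaves_subset: "{1..n} \<subseteq> V"
  using phylo by (simp add: phylo_tree_def)

lemma deg_leaf: "v \<in> {1..n} \<Longrightarrow> deg E v = 1"
  using phylo by (simp add: phylo_tree_def)

lemma deg_interior: "v \<in> V - {1..n} \<Longrightarrow> deg E v \<ge> 3"
  using phylo by (simp add: phylo_tree_def)

definition share :: "nat \<Rightarrow> real" where
  "share v = 1 / (real (deg E v) - 1)"

definition path_share :: "nat \<Rightarrow> nat \<Rightarrow> real" where
  "path_share x y = (\<Prod>v\<in>{v \<in> set (path x y). v \<in> V - {1..n}}. share v)"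

lemma lambda_eq_path_share: "lambda n V E i j = path_share i j"
  by (simp add: lambda_def I_leaves_def path_share_def share_def)

lemma path_share_commute: "x \<in> V \<Longrightarrow> y \<in> V \<Longrightarrow> path_share y x = path_share x y"
  using tpath_rev[of x y] by (simp add: path_share_def)

lemma path_share_self_leaf:
  assumes "w \<in> {1..n}"
  shows "path_share w w = 1"
proof -
  have no_interior: "{v \<in> set (path w w). v \<in> V - {1..n}} = {}"
    using assms by (simp add: tpath_self)
  show ?thesis unfolding path_share_def no_interior by simp
qed

lemma path_share_Cons:
  assumes w: "w \<in> V - {1..n}" and j: "j \<in> branch w x"
  shows "path_share w j = share w * path_share x j"
proof -
  have split: "path w j = w # path x j" using j by (simp add: branch_def)
  then have "w \<notin> set (path x j)" using distinct_tpath[of w j] w in_branchD[OF j] by simp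
  moreover have "{v \<in> set (path w j). v \<in> V - {1..n}}
      = insert w {v \<in> set (path x j). v \<in> V - {1..n}}"
    using split w by auto
  ultimately show ?thesis by (simp add: path_share_def)
qed

lemma path_share_across_edge:
  assumes e: "{a, b} \<in> E" and i: "i \<in> branch b a" and j: "j \<in> branch a b"
  shows "path_share i j = path_share a i * path_share b j"
proof -
  have ai: "a \<in> V" "i \<in> V" using edge_vertices e i in_branchD by auto
  have split: "path i j = path i a @ path b j" using tpath_across_edge[OF e i j] .
  then have "set (path i a) \<inter> set (path b j) = {}"
    using distinct_tpath[of i j] ai in_branchD[OF j] by simp
  then have "path_share i j = path_share i a * path_share b j"
    unfolding path_share_def split
    by (subst prod.union_disjoint[symmetric]) (auto intro!: prod.cong)
  then show ?thesis using path_share_commute[OF ai] by simp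
qed

lemma mu_eq_path_share:
  assumes e: "{a, b} \<in> E" and i: "i \<in> branch b a"
  shows "mu n V E i {a, b} = path_share a i / 2"
  using near_end_eq[OF e i] path_share_commute[of a i] edge_vertices[OF e] in_branchD[OF i]
  by (simp add: mu_def I_edge_def path_share_def share_def)

lemma leaf_branch:
  assumes w: "w \<in> {1..n}" and e: "{u, w} \<in> E"
  shows "branch u w = {w}"
proof -
  have "u \<in> neighbours w" using e by (simp add: neighbours_def insert_commute)
  then have "neighbours w = {u}"
    using card_neighbours[of w] deg_leaf[OF w] by (metis card_1_singletonE singletonD)
  then show ?thesis using branch_eq_insert_Union[OF e] by simp
qed

lemma sum_path_share_branch:
  assumes "{u, w} \<in> E"
  shows "(\<Sum>j\<in>{1..n} \<inter> branch u w. path_share w j) = 1"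
  using assms
proof (induction "card (branch u w)" arbitrary: u w rule: less_induct)
  case less
  note e = less.prems
  show ?case
  proof (cases "w \<in> {1..n}")
    case True
    then show ?thesis using leaf_branch[OF True e] path_share_self_leaf by simp
  next
    case False
    define X where "X = neighbours w - {u}"
    have w: "w \<in> V - {1..n}" using False edge_vertices[OF e] by simp
    have X_edge: "{w, x} \<in> E" if "x \<in> X" for x
      using that by (simp add: X_def neighbours_def)
    have leaves: "{1..n} \<inter> branch u w = (\<Union>x\<in>X. {1..n} \<inter> branch w x)"
      using branch_eq_insert_Union[OF e] False by (auto simp: X_def)
    have smaller: "card (branch w x) < card (branch u w)" if "x \<in> X" for x
      using psubset_card_mono[OF finite_branch branch_of_neighbour_psubset[OF e]] that
      by (simp add: X_def)
    have disjoint: "({1..n} \<inter> branch w x) \<inter> ({1..n} \<inter> branch w y) = {}"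
      if "x \<in> X" "y \<in> X" "x \<noteq> y" for x y
      using branches_at_disjoint[of x y w] that neighbours_subset by (auto simp: X_def)
    have "(\<Sum>j\<in>{1..n} \<inter> branch u w. path_share w j)
        = (\<Sum>x\<in>X. \<Sum>j\<in>{1..n} \<inter> branch w x. path_share w j)"
      unfolding leaves using finite_neighbours disjoint
      by (intro sum.UNION_disjoint) (simp_all add: X_def)
    also have "\<dots> = (\<Sum>x\<in>X. share w * (\<Sum>j\<in>{1..n} \<inter> branch w x. path_share x j))"
      unfolding sum_distrib_left by (intro sum.cong refl) (simp add: path_share_Cons[OF w])
    also have "\<dots> = real (card X) * share w"
      using less.hyps[OF smaller X_edge] by simp
    also have "card X = deg E w - 1"
      using e card_neighbours[of w] finite_neighbours
      by (simp add: X_def neighbours_def insert_commute)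
    also have "real (deg E w - 1) * share w = 1"
      using deg_interior[OF w] by (simp add: share_def of_nat_diff)
    finally show ?thesis .
  qed
qed

lemma leaves_beyond_edge:
  assumes e: "{a, b} \<in> E" and i: "i \<in> branch b a"
  shows "{j \<in> {1..n} - {i}. {a, b} \<in> path_edges (path i j)} = {1..n} \<inter> branch a b"
  using edge_in_tpath_iff[OF e i] leaves_subset not_in_both_branches[OF i] by blast

lemma sum_lambda_through_edge:
  assumes e: "e \<in> E" and i: "i \<in> {1..n}"
  shows "(\<Sum>j | j \<in> {1..n} - {i} \<and> e \<in> path_edges (path i j). lambda n V E i j)
         = 2 * mu n V E i e"
proof -
  obtain a b where ab: "e = {a, b}" "i \<in> branch b a"
    using orient_edge_from e i leaves_subset by blast
  have "(\<Sum>j | j \<in> {1..n} - {i} \<and> e \<in> path_edges (path i j). lambda n V E i j)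
      = (\<Sum>j\<in>{1..n} \<inter> branch a b. path_share a i * path_share b j)"
    using leaves_beyond_edge[of a b i] path_share_across_edge[of a b i] e ab
    by (simp add: lambda_eq_path_share)
  also have "\<dots> = path_share a i"
    using sum_path_share_branch[of a b] e ab by (simp flip: sum_distrib_left)
  finally show ?thesis using mu_eq_path_share[of a b i] e ab by simp
qed

lemma sum_mu_branch:
  assumes e: "{a, b} \<in> E"
  shows "(\<Sum>i\<in>{1..n} \<inter> branch b a. mu n V E i {a, b}) = 1 / 2"
proof -
  have "(\<Sum>i\<in>{1..n} \<inter> branch b a. mu n V E i {a, b})
      = (\<Sum>i\<in>{1..n} \<inter> branch b a. path_share a i) / 2"
    unfolding sum_divide_distrib by (rule sum.cong) (simp_all add: mu_eq_path_share[OF e])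
  also have "\<dots> = 1 / 2"
    using sum_path_share_branch[of b a] e by (simp add: insert_commute)
  finally show ?thesis .
qed

lemma sum_mu_edge:
  assumes e: "e \<in> E"
  shows "(\<Sum>i\<in>{1..n}. mu n V E i e) = 1"
proof -
  obtain a b where ab: "e = {a, b}" using edgeE[OF e] by blast
  then have ab': "e = {b, a}" "{a, b} \<in> E" "{b, a} \<in> E" using e by (auto simp: insert_commute)
  have "{1..n} = ({1..n} \<inter> branch b a) \<union> ({1..n} \<inter> branch a b)"
    using in_some_branch[OF ab'(2)] leaves_subset by blast
  moreover have "({1..n} \<inter> branch b a) \<inter> ({1..n} \<inter> branch a b) = {}"
    using not_in_both_branches by blast
  ultimately have "(\<Sum>i\<in>{1..n}. mu n V E i e)
      = (\<Sum>i\<in>{1..n} \<inter> branch b a. mu n V E i e)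
        + (\<Sum>i\<in>{1..n} \<inter> branch a b. mu n V E i e)"
    by (metis finite_Int finite_atLeastAtMost sum.union_disjoint)
  also have "\<dots> = 1"
    using sum_mu_branch[OF ab'(2)] sum_mu_branch[OF ab'(3)] ab ab'(1) by simp
  finally show ?thesis .
qed

lemma phi_Pa_eq_sum_lambda_tdist:
  assumes i: "i \<in> {1..n}"
  shows "phi_Pa n V E l i = 1/2 * (\<Sum>j\<in>{1..n} - {i}. lambda n V E i j * tdist E l i j)"
proof -
  have "(\<Sum>j\<in>{1..n} - {i}. lambda n V E i j * tdist E l i j)
      = (\<Sum>j\<in>{1..n} - {i}.
           \<Sum>e | e \<in> E \<and> e \<in> path_edges (path i j). lambda n V E i j * l e)"
  proof (intro sum.cong refl)
    fix j assume "j \<in> {1..n} - {i}"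
    then have "path_edges (path i j) \<subseteq> E"
      using i leaves_subset tpath(1) path_edges_subset by blast
    then show "lambda n V E i j * tdist E l i j
        = (\<Sum>e | e \<in> E \<and> e \<in> path_edges (path i j). lambda n V E i j * l e)"
      by (simp add: tdist_def sum_distrib_left Int_absorb1 Collect_conj_eq)
  qed
  also have "\<dots> = (\<Sum>e\<in>E.
      \<Sum>j | j \<in> {1..n} - {i} \<and> e \<in> path_edges (path i j). lambda n V E i j * l e)"
    by (rule sum.swap_restrict) (simp_all add: finite_E)
  also have "\<dots> = (\<Sum>e\<in>E. 2 * mu n V E i e * l e)"
    using sum_lambda_through_edge[OF _ i] by (simp flip: sum_distrib_right)
  finally show ?thesis by (simp add: phi_Pa_def sum_distrib_left)
qed

lemma sum_phi_Pa: "(\<Sum>i\<in>{1..n}. phi_Pa n V E l i) = (\<Sum>e\<in>E. l e)"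
proof -
  have "(\<Sum>i\<in>{1..n}. phi_Pa n V E l i) = (\<Sum>e\<in>E. (\<Sum>i\<in>{1..n}. mu n V E i e) * l e)"
    unfolding phi_Pa_def sum_distrib_right by (rule sum.swap)
  then show ?thesis using sum_mu_edge by simp
qed

end

theorem theorem9:
  fixes n :: nat and V :: "nat set" and E :: "nat set set" and l :: "nat set \<Rightarrow> real"
  assumes "n \<ge> 2"
    and "phylo_tree n V E"
    and "\<forall>e\<in>E. l e \<ge> 0"
  shows "(\<forall>i\<in>{1..n}. phi_Pa n V E l i
            = 1/2 * (\<Sum>j\<in>{1..n} - {i}. lambda n V E i j * tdist E l i j))
         \<and> (\<Sum>i\<in>{1..n}. phi_Pa n V E l i) = (\<Sum>e\<in>E. l e)"
proof -
  interpret phylogenetic_tree n V E using assms(2) by unfold_locales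
  show ?thesis using phi_Pa_eq_sum_lambda_tdist sum_phi_Pa by blast
qed

end
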